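(* Let $n\ge 3$, let $A=[a_{ij}]$ be a real $n\times n$ matrix with zero diagonal and let $f(\sigma)=\sum_{i=1}^{n-1}\sum_{j=i+1}^n a_{\sigma(i)\sigma(j)}$ be the LOP objective function on $\Sigma_n$. Then $\hat f_{(n-1,1)}=0$ if and only if $\sum_{j=1}^n(a_{ij}-a_{ji})=0$ for all $i=1,\dots,n$.
   Context: $\Sigma_n$ is the symmetric group on $\{1,\dots,n\}$; $\sigma(k)$ is the row/column index placed in position $k$. For a partition $\lambda$ of $n$, $\rho_\lambda$ is the irreducible representation of $\Sigma_n$ indexed by $\lambda$ and $\hat f_\lambda=\sum_{\sigma\in\Sigma_n}f(\sigma)\rho_\lambda(\sigma)$. *)

theory Defs
  imports Complex_Main "HOL-Combinatorics.Permutations"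
begin

definition Sym :: "nat \<Rightarrow> (nat \<Rightarrow> nat) set" where
  "Sym n = {\<sigma>. \<sigma> permutes {1..n}}"

definition lop_obj :: "nat \<Rightarrow> (nat \<Rightarrow> nat \<Rightarrow> real) \<Rightarrow> (nat \<Rightarrow> nat) \<Rightarrow> real" where
  "lop_obj n A \<sigma> = (\<Sum>i=1..n-1. \<Sum>j=i+1..n. A (\<sigma> i) (\<sigma> j))"

text \<open>A concrete realization of the irreducible representation indexed by the partition (n-1,1)
  (the standard representation): the permutation action e_j \<mapsto> e_{sigma j} restricted to the
  sum-zero subspace of R^n, written in the basis b_i = e_i - e_n (i = 1..n-1).
  Entry (i,j), for i,j in {1..n-1}, of the (n-1)x(n-1) matrix rho(sigma).\<close>

definition std_rep :: "nat \<Rightarrow> (nat \<Rightarrow> nat) \<Rightarrow> nat \<Rightarrow> nat \<Rightarrow> real" where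
  "std_rep n \<sigma> i j = (if \<sigma> j = i then 1 else 0) - (if \<sigma> n = i then 1 else 0)"

definition fourier_std :: "nat \<Rightarrow> ((nat \<Rightarrow> nat) \<Rightarrow> real) \<Rightarrow> nat \<Rightarrow> nat \<Rightarrow> real" where
  "fourier_std n f i j = (\<Sum>\<sigma>\<in>Sym n. f \<sigma> * std_rep n \<sigma> i j)"

end

theory Submission
  imports Defs
begin

text \<open>
  In the basis of the standard representation, the entry (i, j) of the Fourier coefficient is
  P(j, i) - P(n, i), where P(k, i) is the sum of f over the permutations placing i at position k.
  Composing with the adjacent transposition (k k+1) changes the LOP objective only in the pair at
  positions k, k+1, so P(k+1, i) = P(k, i) - (n-2)! d(i) for the net flow
  d(i) = sum_b (a_ib - a_bi), independent of k. Hence the entry (i, j) equals (n - j) (n-2)! d(i),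
  and all entries vanish iff d(i) = 0 for all i < n; then also d(n) = 0, because the net flows
  sum to zero.
\<close>

lemma permutes_exists_two_values:
  assumes "k \<in> T" "l \<in> T" "a \<in> T" "b \<in> T" "k \<noteq> l" "a \<noteq> b"
  obtains \<pi> where "\<pi> permutes T" "\<pi> k = a" "\<pi> l = b"
proof
  let ?\<tau> = "transpose a k"
  have "?\<tau> l \<in> T"
    using assms by (auto simp: transpose_def)
  then show "transpose b (?\<tau> l) \<circ> ?\<tau> permutes T"
    using assms by (intro permutes_compose permutes_swap_id)
  show "(transpose b (?\<tau> l) \<circ> ?\<tau>) k = a" "(transpose b (?\<tau> l) \<circ> ?\<tau>) l = b"
    using assms by (auto simp: transpose_def)
qed

lemma card_permutes_two_values:
  assumes "finite T" "k \<in> T" "l \<in> T" "a \<in> T" "b \<in> T" "k \<noteq> l" "a \<noteq> b"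
  shows "card {\<sigma>. \<sigma> permutes T \<and> \<sigma> k = a \<and> \<sigma> l = b} = fact (card T - 2)"
proof -
  obtain \<pi> where \<pi>: "\<pi> permutes T" "\<pi> k = a" "\<pi> l = b"
    using permutes_exists_two_values assms(2-) by metis
  have "bij_betw ((\<circ>) \<pi>) {\<tau>. \<tau> permutes T - {k, l}} {\<sigma>. \<sigma> permutes T \<and> \<sigma> k = a \<and> \<sigma> l = b}"
  proof (rule bij_betw_byWitness[where f' = "(\<circ>) (inv \<pi>)"])
    show "\<forall>\<tau>\<in>{\<tau>. \<tau> permutes T - {k, l}}. inv \<pi> \<circ> (\<pi> \<circ> \<tau>) = \<tau>"
      "\<forall>\<sigma>\<in>{\<sigma>. \<sigma> permutes T \<and> \<sigma> k = a \<and> \<sigma> l = b}. \<pi> \<circ> (inv \<pi> \<circ> \<sigma>) = \<sigma>"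
      using permutes_inv_o[OF \<pi>(1)] by (simp_all add: o_assoc)
    show "(\<circ>) \<pi> ` {\<tau>. \<tau> permutes T - {k, l}} \<subseteq> {\<sigma>. \<sigma> permutes T \<and> \<sigma> k = a \<and> \<sigma> l = b}"
      using \<pi> by (auto intro: permutes_compose permutes_subset dest: permutes_not_in)
    show "(\<circ>) (inv \<pi>) ` {\<sigma>. \<sigma> permutes T \<and> \<sigma> k = a \<and> \<sigma> l = b} \<subseteq> {\<tau>. \<tau> permutes T - {k, l}}"
    proof
      fix \<tau> assume "\<tau> \<in> (\<circ>) (inv \<pi>) ` {\<sigma>. \<sigma> permutes T \<and> \<sigma> k = a \<and> \<sigma> l = b}"
      then obtain \<sigma> where \<sigma>: "\<sigma> permutes T" "\<sigma> k = \<pi> k" "\<sigma> l = \<pi> l" and \<tau>: "\<tau> = inv \<pi> \<circ> \<sigma>"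
        using \<pi> by auto
      have "\<tau> permutes T"
        using \<sigma>(1) \<pi>(1) by (simp add: \<tau> permutes_compose permutes_inv)
      moreover have "\<tau> k = k" "\<tau> l = l"
        by (simp_all add: \<tau> \<sigma> permutes_inverses(2)[OF \<pi>(1)])
      ultimately show "\<tau> \<in> {\<tau>. \<tau> permutes T - {k, l}}"
        by (auto intro: permutes_superset)
    qed
  qed
  then have "card {\<sigma>. \<sigma> permutes T \<and> \<sigma> k = a \<and> \<sigma> l = b} = card {\<tau>. \<tau> permutes T - {k, l}}"
    by (simp add: bij_betw_same_card)
  also have "\<dots> = fact (card T - 2)"
    using assms by (simp add: card_permutations card_Diff_subset numeral_2_eq_2)
  finally show ?thesis .
qed

lemma sum_permutes_value_at:
  fixes g :: "'a \<Rightarrow> 'b::semiring_char_0"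
  assumes "finite T" "k \<in> T" "l \<in> T" "k \<noteq> l" "i \<in> T"
  shows "(\<Sum>\<sigma> | \<sigma> permutes T \<and> \<sigma> k = i. g (\<sigma> l)) = fact (card T - 2) * (\<Sum>b\<in>T - {i}. g b)"
proof -
  let ?S = "{\<sigma>. \<sigma> permutes T \<and> \<sigma> k = i}"
  have "finite ?S"
    using finite_permutations[OF assms(1)] by (rule rev_finite_subset) auto
  moreover have "(\<lambda>\<sigma>. \<sigma> l) ` ?S \<subseteq> T - {i}"
    using assms by (auto simp: permutes_in_image dest: permutes_inj[THEN injD])
  ultimately have "(\<Sum>\<sigma>\<in>?S. g (\<sigma> l)) = (\<Sum>b\<in>T - {i}. \<Sum>\<sigma> | \<sigma> \<in> ?S \<and> \<sigma> l = b. g (\<sigma> l))"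
    using assms(1) by (intro sum.group[symmetric]) simp_all
  also have "\<dots> = (\<Sum>b\<in>T - {i}. fact (card T - 2) * g b)"
  proof (rule sum.cong)
    fix b assume "b \<in> T - {i}"
    then have "card {\<sigma> \<in> ?S. \<sigma> l = b} = fact (card T - 2)"
      using card_permutes_two_values[of T k l i b] assms by (auto simp: conj_assoc)
    then show "(\<Sum>\<sigma> | \<sigma> \<in> ?S \<and> \<sigma> l = b. g (\<sigma> l)) = fact (card T - 2) * g b"
      by (simp add: of_nat_fact)
  qed simp
  finally show ?thesis
    by (simp add: sum_distrib_left)
qed

lemma sum_permutes_value_compose_transpose:
  assumes "k \<in> S" "l \<in> S"
  shows "(\<Sum>\<sigma> | \<sigma> permutes S \<and> \<sigma> l = i. f \<sigma>) = (\<Sum>\<sigma> | \<sigma> permutes S \<and> \<sigma> k = i. f (\<sigma> \<circ> transpose k l))"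
  by (rule sum.reindex_bij_witness[of _ "\<lambda>\<sigma>. \<sigma> \<circ> transpose k l" "\<lambda>\<sigma>. \<sigma> \<circ> transpose k l"])
    (use assms in \<open>auto simp: o_assoc[symmetric] intro: permutes_compose permutes_swap_id\<close>)

definition increasing_pairs :: "nat \<Rightarrow> (nat \<times> nat) set" where
  "increasing_pairs n = {(p, q). 1 \<le> p \<and> p < q \<and> q \<le> n}"

lemma finite_increasing_pairs: "finite (increasing_pairs n)"
  by (rule finite_subset[of _ "{1..n} \<times> {1..n}"]) (auto simp: increasing_pairs_def)

lemma lop_obj_eq_sum_increasing_pairs:
  "lop_obj n A \<sigma> = (\<Sum>(p, q)\<in>increasing_pairs n. A (\<sigma> p) (\<sigma> q))"
proof -
  have "increasing_pairs n = Sigma {1..n-1} (\<lambda>p. {p+1..n})"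
    by (auto simp: increasing_pairs_def)
  then show ?thesis
    by (simp add: lop_obj_def sum.Sigma)
qed

lemma adjacent_transpose_increasing_pairs:
  assumes "1 \<le> k" "k < n" "x \<in> increasing_pairs n - {(k, Suc k)}"
  shows "map_prod (transpose k (Suc k)) (transpose k (Suc k)) x \<in> increasing_pairs n - {(k, Suc k)}"
  using assms by (cases x) (clarsimp simp: increasing_pairs_def transpose_def)

lemma sum_increasing_pairs_adjacent_transpose:
  fixes g :: "nat \<Rightarrow> nat \<Rightarrow> 'a::ab_group_add"
  assumes "1 \<le> k" "k < n"
  shows "(\<Sum>(p, q)\<in>increasing_pairs n. g (transpose k (Suc k) p) (transpose k (Suc k) q))
       = (\<Sum>(p, q)\<in>increasing_pairs n. g p q) - g k (Suc k) + g (Suc k) k"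
proof -
  let ?t = "transpose k (Suc k)"
  let ?P = "increasing_pairs n - {(k, Suc k)}"
  have kk: "(k, Suc k) \<in> increasing_pairs n"
    using assms by (simp add: increasing_pairs_def)
  have "(\<Sum>(p, q)\<in>?P. g (?t p) (?t q)) = (\<Sum>(p, q)\<in>?P. g p q)"
    by (rule sum.reindex_bij_witness[of _ "map_prod ?t ?t" "map_prod ?t ?t"])
      (use adjacent_transpose_increasing_pairs[OF assms] in auto)
  then show ?thesis
    using sum.remove[OF finite_increasing_pairs kk, of "case_prod g"]
      sum.remove[OF finite_increasing_pairs kk, of "\<lambda>(p, q). g (?t p) (?t q)"]
    by (simp add: algebra_simps)
qed

lemma lop_obj_compose_adjacent_transpose:
  assumes "1 \<le> k" "k < n"
  shows "lop_obj n A (\<sigma> \<circ> transpose k (Suc k))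
       = lop_obj n A \<sigma> - A (\<sigma> k) (\<sigma> (Suc k)) + A (\<sigma> (Suc k)) (\<sigma> k)"
  using sum_increasing_pairs_adjacent_transpose[OF assms, of "\<lambda>p q. A (\<sigma> p) (\<sigma> q)"]
  by (simp add: lop_obj_eq_sum_increasing_pairs)

definition position_sum :: "nat \<Rightarrow> ((nat \<Rightarrow> nat) \<Rightarrow> real) \<Rightarrow> nat \<Rightarrow> nat \<Rightarrow> real" where
  "position_sum n f k i = (\<Sum>\<sigma> | \<sigma> permutes {1..n} \<and> \<sigma> k = i. f \<sigma>)"

lemma finite_Sym: "finite (Sym n)"
  by (simp add: Sym_def finite_permutations)

lemma fourier_std_eq_position_sum_diff:
  "fourier_std n f i j = position_sum n f j i - position_sum n f n i"
proof -
  have "position_sum n f k i = (\<Sum>\<sigma>\<in>Sym n. f \<sigma> * (if \<sigma> k = i then 1 else 0))" for k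
    using sum.inter_filter[OF finite_Sym, where g = f and P = "\<lambda>\<sigma>. \<sigma> k = i"]
    by (auto simp: position_sum_def Sym_def intro!: sum.cong)
  then show ?thesis
    by (simp add: fourier_std_def std_rep_def right_diff_distrib sum_subtractf)
qed

lemma position_sum_lop_obj_Suc:
  assumes "1 \<le> k" "k < n" "i \<in> {1..n}"
  shows "position_sum n (lop_obj n A) (Suc k) i
       = position_sum n (lop_obj n A) k i - fact (n - 2) * (\<Sum>b=1..n. A i b - A b i)"
proof -
  let ?S = "{\<sigma>. \<sigma> permutes {1..n} \<and> \<sigma> k = i}"
  have "position_sum n (lop_obj n A) (Suc k) i = (\<Sum>\<sigma>\<in>?S. lop_obj n A (\<sigma> \<circ> transpose k (Suc k)))"
    unfolding position_sum_def using assms by (intro sum_permutes_value_compose_transpose) auto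
  also have "\<dots> = (\<Sum>\<sigma>\<in>?S. lop_obj n A \<sigma> - (A i (\<sigma> (Suc k)) - A (\<sigma> (Suc k)) i))"
    using lop_obj_compose_adjacent_transpose[OF assms(1,2)] by (intro sum.cong) auto
  also have "\<dots> = position_sum n (lop_obj n A) k i - (\<Sum>\<sigma>\<in>?S. A i (\<sigma> (Suc k)) - A (\<sigma> (Suc k)) i)"
    by (simp add: position_sum_def sum_subtractf)
  also have "(\<Sum>\<sigma>\<in>?S. A i (\<sigma> (Suc k)) - A (\<sigma> (Suc k)) i) = fact (n - 2) * (\<Sum>b\<in>{1..n} - {i}. A i b - A b i)"
    using sum_permutes_value_at[of "{1..n}" k "Suc k" i "\<lambda>b. A i b - A b i"] assms by simp
  also have "(\<Sum>b\<in>{1..n} - {i}. A i b - A b i) = (\<Sum>b=1..n. A i b - A b i)"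
    using assms(3) by (simp add: sum_diff1)
  finally show ?thesis .
qed

lemma position_sum_lop_obj_linear:
  assumes "1 \<le> j" "j \<le> m" "m \<le> n" "i \<in> {1..n}"
  shows "position_sum n (lop_obj n A) m i
       = position_sum n (lop_obj n A) j i - real (m - j) * fact (n - 2) * (\<Sum>b=1..n. A i b - A b i)"
  using assms(2,3)
proof (induction m rule: dec_induct)
  case (step m)
  then show ?case
    using position_sum_lop_obj_Suc[of m n i A] assms(1,4) by (simp add: Suc_diff_le algebra_simps)
qed simp

lemma fourier_std_lop_obj:
  assumes "1 \<le> j" "j \<le> n" "i \<in> {1..n}"
  shows "fourier_std n (lop_obj n A) i j = real (n - j) * fact (n - 2) * (\<Sum>b=1..n. A i b - A b i)"
  using position_sum_lop_obj_linear[of j n n i A] assms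
  by (simp add: fourier_std_eq_position_sum_diff)

lemma sum_net_flows_eq_0:
  fixes A :: "'a \<Rightarrow> 'a \<Rightarrow> 'b::ab_group_add"
  shows "(\<Sum>i\<in>T. \<Sum>j\<in>T. A i j - A j i) = 0"
  by (simp add: sum_subtractf sum.swap[of "\<lambda>i j. A j i"])

theorem proposition3:
  fixes n :: nat and A :: "nat \<Rightarrow> nat \<Rightarrow> real"
  assumes "n \<ge> 3"
    and "\<forall>i\<in>{1..n}. A i i = 0"
  shows "(\<forall>i\<in>{1..n-1}. \<forall>j\<in>{1..n-1}. fourier_std n (lop_obj n A) i j = 0) \<longleftrightarrow>
         (\<forall>i\<in>{1..n}. (\<Sum>j=1..n. A i j - A j i) = 0)"
proof
  assume vanish: "\<forall>i\<in>{1..n-1}. \<forall>j\<in>{1..n-1}. fourier_std n (lop_obj n A) i j = 0"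
  have below: "(\<Sum>j=1..n. A i j - A j i) = 0" if "i \<in> {1..n} - {n}" for i
    using vanish fourier_std_lop_obj[of 1 n i A] that assms(1) by auto
  have "(\<Sum>i\<in>{1..n}. \<Sum>j=1..n. A i j - A j i)
      = (\<Sum>j=1..n. A n j - A j n) + (\<Sum>i\<in>{1..n} - {n}. \<Sum>j=1..n. A i j - A j i)"
    using assms(1) by (intro sum.remove) auto
  then have "(\<Sum>j=1..n. A n j - A j n) = 0"
    using sum_net_flows_eq_0[of A "{1..n}"] below by simp
  with below show "\<forall>i\<in>{1..n}. (\<Sum>j=1..n. A i j - A j i) = 0"
    by blast
next
  assume "\<forall>i\<in>{1..n}. (\<Sum>j=1..n. A i j - A j i) = 0"
  then show "\<forall>i\<in>{1..n-1}. \<forall>j\<in>{1..n-1}. fourier_std n (lop_obj n A) i j = 0"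
    using fourier_std_lop_obj by auto
qed

end
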